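(* Let $d\in[n]$, let every $v_j$ be $d$-self-bounding, fix $\mathbf s$, rename bidders so that $v_1(\mathbf s)\ge\cdots\ge v_n(\mathbf s)>0$, and let $k=\max\{i:v_i(\mathbf s)>v_1(\mathbf s)/2\}$. For each $i\in[n]$ define $$A_i=\frac{\log_2^\dagger\big(v_1(\mathbf s)/\underline v_1^{(i)}(\mathbf s)\big)}{k+1}+\sum_{j=1}^k\frac{\log_2^\dagger\big(v_j(\mathbf s)/\underline v_j^{(i)}(\mathbf s)\big)}{j(j+1)}.$$ Then $\sum_{i=1}^nA_i\le 2d$.
   Context: Signals $s_i\in S_i\subseteq\mathbb R$, $\mathbf S=S_1\times\cdots\times S_n$, valuations $v_j:\mathbf S\to\mathbb R_{>0}$. Lower estimates: $\underline v_j^{(i)}(\mathbf s)=\inf_{o_i\in S_i}v_j(o_i,\mathbf s_{-i})$. $v$ is $d$-self-bounding if $\sum_{i=1}^n(v(\mathbf s)-\inf_{o_i}v(o_i,\mathbf s_{-i}))\le d\,v(\mathbf s)$ for all $\mathbf s$. $\log_2^\dagger(\alpha)=\max(0,\min(1,\log_2\alpha))$, with $a/0=\infty$, $\log_2\infty=\infty$. *)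

theory Defs
  imports "HOL-Analysis.Analysis" "HOL-Library.FuncSet"
begin

definition profiles :: "nat \<Rightarrow> (nat \<Rightarrow> real set) \<Rightarrow> (nat \<Rightarrow> real) set" where
  "profiles n S = PiE {1..n} S"

definition lower_est :: "(nat \<Rightarrow> real set) \<Rightarrow> ((nat \<Rightarrow> real) \<Rightarrow> real) \<Rightarrow> nat \<Rightarrow> (nat \<Rightarrow> real) \<Rightarrow> real" where
  "lower_est S f i s = Inf ((\<lambda>x. f (s(i := x))) ` S i)"

definition self_bounding :: "nat \<Rightarrow> (nat \<Rightarrow> real set) \<Rightarrow> real \<Rightarrow> ((nat \<Rightarrow> real) \<Rightarrow> real) \<Rightarrow> bool" where
  "self_bounding n S d f \<longleftrightarrow>
     (\<forall>s\<in>profiles n S. (\<Sum>i=1..n. f s - lower_est S f i s) \<le> d * f s)"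

definition ediv :: "real \<Rightarrow> real \<Rightarrow> ereal" where
  "ediv a b = (if b = 0 then \<infinity> else ereal (a / b))"

definition log2dag :: "ereal \<Rightarrow> real" where
  "log2dag x = (if x = \<infinity> then 1 else if x = -\<infinity> then 0
                else max 0 (min 1 (log 2 (real_of_ereal x))))"

end

theory Submission
  imports Defs
begin

text \<open>Since \<open>-ln\<close> is convex, on \<open>[1/2, 1]\<close> it lies below its chord \<open>2 ln 2 (1 - u)\<close>;
  hence \<open>log\<^sup>\<dagger>\<^sub>2 (v / w) \<le> 2 (v - w) / v\<close> for \<open>0 \<le> w \<le> v\<close>. Summing over \<open>i\<close> and using
  \<open>d\<close>-self-bounding, each valuation contributes at most \<open>2d\<close> in total, and the weights
  \<open>1/(k+1)\<close> and \<open>1/(j(j+1))\<close>, \<open>j \<le> k\<close>, telescope to \<open>1\<close>.\<close>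

lemma minus_ln_le_chord:
  fixes u :: real assumes "1/2 \<le> u" "u \<le> 1"
  shows "- ln u \<le> 2 * ln 2 * (1 - u)"
proof -
  have "convex_on {0<..} (\<lambda>x::real. - ln x)"
    using ln_concave by (simp add: concave_on_def)
  then have "convex_on {1/2..1} (\<lambda>x::real. - ln x)"
    by (rule convex_on_subset) auto
  from convex_onD_Icc''[OF this, of u] assms
  show ?thesis by (simp add: ln_div)
qed

lemma log2dag_ediv_le:
  fixes v w :: real assumes "0 \<le> w" "w \<le> v" "0 < v"
  shows "log2dag (ediv v w) \<le> 2 * ((v - w) / v)"
proof (cases "w = 0")
  case True
  then show ?thesis using assms by (simp add: ediv_def log2dag_def)
next
  case False
  define u where "u = w / v"
  have u: "0 < u" "u \<le> 1" "(v - w) / v = 1 - u" "log 2 (v / w) = - ln u / ln 2"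
    using assms False by (auto simp: u_def field_simps log_def ln_div)
  have "max 0 (min 1 (log 2 (v / w))) \<le> 2 * (1 - u)"
  proof (cases "1/2 \<le> u")
    case True
    have "- ln u / ln 2 \<le> 2 * (1 - u)"
      using minus_ln_le_chord[OF True u(2)] by (subst pos_divide_le_eq) (simp_all add: algebra_simps)
    then show ?thesis using u by auto
  qed (use u in auto)
  then show ?thesis using False u by (simp add: ediv_def log2dag_def)
qed

lemma update_in_profiles:
  assumes "s \<in> profiles n S" "i \<in> {1..n}" "x \<in> S i"
  shows "s(i := x) \<in> profiles n S"
  using assms unfolding profiles_def by (auto simp: PiE_def Pi_def extensional_def)

lemma lower_est_bounds:
  assumes pos: "\<forall>t\<in>profiles n S. f t > 0" and s: "s \<in> profiles n S" and i: "i \<in> {1..n}"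
  shows "0 \<le> lower_est S f i s" "lower_est S f i s \<le> f s"
proof -
  let ?X = "(\<lambda>x. f (s(i := x))) ` S i"
  have si: "s i \<in> S i" using s i unfolding profiles_def by auto
  have X_pos: "\<forall>y\<in>?X. 0 < y" using pos update_in_profiles[OF s i] by auto
  have "f s \<in> ?X" using si by (auto intro!: image_eqI[where x = "s i"])
  moreover have "bdd_below ?X" using X_pos by (auto intro!: bdd_belowI[of _ 0] less_imp_le)
  ultimately show "lower_est S f i s \<le> f s" unfolding lower_est_def by (rule cInf_lower)
  show "0 \<le> lower_est S f i s"
    unfolding lower_est_def using si X_pos by (intro cInf_greatest) (auto intro: less_imp_le)
qed

lemma sum_log2dag_lower_est_le:
  assumes sb: "self_bounding n S d f" and pos: "\<forall>t\<in>profiles n S. f t > 0"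
    and s: "s \<in> profiles n S"
  shows "(\<Sum>i=1..n. log2dag (ediv (f s) (lower_est S f i s))) \<le> 2 * d"
proof -
  have fs: "0 < f s" using pos s by auto
  have "(\<Sum>i=1..n. log2dag (ediv (f s) (lower_est S f i s)))
      \<le> (\<Sum>i=1..n. 2 * ((f s - lower_est S f i s) / f s))"
    using lower_est_bounds[OF pos s] fs by (intro sum_mono log2dag_ediv_le) auto
  also have "\<dots> = 2 / f s * (\<Sum>i=1..n. f s - lower_est S f i s)"
    by (simp add: sum_distrib_left sum_divide_distrib)
  also have "\<dots> \<le> 2 / f s * (d * f s)"
    using sb s fs unfolding self_bounding_def by (intro mult_left_mono) auto
  also have "\<dots> = 2 * d" using fs by simp
  finally show ?thesis .
qed

lemma sum_inverse_consecutive_products: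
  "(\<Sum>j=1..k. 1 / real (j * (j + 1))) = 1 - 1 / real (k + 1)"
proof (induction k)
  case (Suc k)
  have "1 - 1 / (x + 1) + 1 / ((x + 1) * (x + 2)) = 1 - 1 / (x + 2)" if "0 \<le> x" for x :: real
    using that by (simp add: field_simps) (smt (verit) mult_nonneg_nonneg)
  from this[of "real k"] Suc show ?case
    by (simp add: algebra_simps)
qed simp

lemma telescoping_weighted_sum_le:
  fixes c :: "nat \<Rightarrow> real"
  assumes "c 1 \<le> C" "\<forall>j\<in>{1..k}. c j \<le> C"
  shows "c 1 / real (k + 1) + (\<Sum>j=1..k. c j / real (j * (j + 1))) \<le> C"
proof -
  have "c 1 / real (k + 1) + (\<Sum>j=1..k. c j / real (j * (j + 1)))
      \<le> C / real (k + 1) + (\<Sum>j=1..k. C / real (j * (j + 1)))"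
    using assms by (intro add_mono divide_right_mono sum_mono) auto
  also have "\<dots> = C * (1 / real (k + 1) + (\<Sum>j=1..k. 1 / real (j * (j + 1))))"
    by (simp add: sum_distrib_left field_simps)
  also have "\<dots> = C" by (subst sum_inverse_consecutive_products) simp
  finally show ?thesis .
qed

theorem mainTheorem11:
  fixes n d :: nat and S :: "nat \<Rightarrow> real set"
    and v :: "nat \<Rightarrow> (nat \<Rightarrow> real) \<Rightarrow> real" and s :: "nat \<Rightarrow> real"
  assumes d: "d \<in> {1..n}"
    and pos: "\<forall>j\<in>{1..n}. \<forall>t\<in>profiles n S. v j t > 0"
    and sb: "\<forall>j\<in>{1..n}. self_bounding n S (real d) (v j)"
    and s: "s \<in> profiles n S"
    and sorted: "\<forall>j\<in>{1..n}. \<forall>j'\<in>{1..n}. j \<le> j' \<longrightarrow> v j' s \<le> v j s"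
  shows "let k = Max {i\<in>{1..n}. v i s > v 1 s / 2};
             A = (\<lambda>i. log2dag (ediv (v 1 s) (lower_est S (v 1) i s)) / real (k + 1)
                      + (\<Sum>j=1..k. log2dag (ediv (v j s) (lower_est S (v j) i s)) / real (j * (j + 1))))
         in (\<Sum>i=1..n. A i) \<le> 2 * real d"
proof -
  define k where "k = Max {i\<in>{1..n}. v i s > v 1 s / 2}"
  define c where "c = (\<lambda>j. \<Sum>i=1..n. log2dag (ediv (v j s) (lower_est S (v j) i s)))"
  have one: "1 \<in> {1..n}" using d by auto
  have "k \<le> n" unfolding k_def by (subst Max_le_iff) (use one pos s in auto)
  then have c_le: "\<forall>j\<in>{1..k}. c j \<le> 2 * real d" "c 1 \<le> 2 * real d"
    using sum_log2dag_lower_est_le pos sb s one unfolding c_def by auto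
  have "(\<Sum>i=1..n. log2dag (ediv (v 1 s) (lower_est S (v 1) i s)) / real (k + 1)
          + (\<Sum>j=1..k. log2dag (ediv (v j s) (lower_est S (v j) i s)) / real (j * (j + 1))))
      = c 1 / real (k + 1) + (\<Sum>j=1..k. c j / real (j * (j + 1)))"
    unfolding c_def by (simp add: sum.distrib sum_divide_distrib) (rule sum.swap)
  also have "\<dots> \<le> 2 * real d" using c_le by (rule telescoping_weighted_sum_le[rotated])
  finally show ?thesis unfolding Let_def k_def .
qed

end
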